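(* Let $r=(r(k))_{k\in2\mathbb{Z}}\in\ell^2(2\mathbb{Z})$ with $r(k)\ge0$. For $n,s\in\mathbb{N}$ and $m\in n+2\mathbb{Z}$ define $$\sigma_1(n,s;m)=\sum_{j_1,\dots,j_s\neq n}\frac{r(m+j_1)}{|n-j_1|}\cdot\frac{r(j_1+j_2)}{|n-j_2|}\cdots\frac{r(j_{s-1}+j_s)}{|n-j_s|},$$ where $j_1,\dots,j_s$ range over $n+2\mathbb{Z}\setminus\{n\}$. Let $\tilde\rho_n=\mathcal{E}_n(r)+2\|r\|/\sqrt n$. Then for $n\ge4$: $$\sigma_1(n,1;m)\le\tilde\rho_n\ \text{ if } |m-n|\le n/2,\qquad \sigma_1(n,1;m)\le\|r\|\ \text{ for all } m\in n+2\mathbb{Z},$$ and, for all $p\in\mathbb{N}$ (and, for the second inequality, also $p=0$) and all $m\in n+2\mathbb{Z}$, $$\sigma_1(n,2p;m)\le(2\|r\|\tilde\rho_n)^p,\qquad \sigma_1(n,2p+1;m)\le\|r\|\,(2\|r\|\tilde\rho_n)^p.$$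
   Context: $\|r\|$ denotes the $\ell^2$ norm of $r$, and $\mathcal{E}_n(r)=\left(\sum_{|k|\ge n}|r(k)|^2\right)^{1/2}$ is the $\ell^2$-norm of the tail of $r$. *)

theory Defs
  imports "HOL-Analysis.Analysis"
begin

text \<open>Sequences on 2Z are modelled as functions int => real; only values at even
  arguments matter.\<close>

definition l2norm :: "(int \<Rightarrow> real) \<Rightarrow> real" where
  "l2norm r = sqrt (\<Sum>\<^sub>\<infinity> k \<in> {k. even k}. (r k)\<^sup>2)"

definition tailnorm :: "nat \<Rightarrow> (int \<Rightarrow> real) \<Rightarrow> real" where
  "tailnorm n r = sqrt (\<Sum>\<^sub>\<infinity> k \<in> {k. even k \<and> \<bar>k\<bar> \<ge> int n}. (r k)\<^sup>2)"

definition Jset :: "nat \<Rightarrow> int set" where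
  "Jset n = {j. even (j - int n) \<and> j \<noteq> int n}"

definition tuples :: "nat \<Rightarrow> nat \<Rightarrow> (nat \<Rightarrow> int) set" where
  "tuples n s = {j. (\<forall>i\<in>{1..s}. j i \<in> Jset n) \<and> (\<forall>i. i \<notin> {1..s} \<longrightarrow> j i = 0)}"

text \<open>sigma_1(n,s;m), a sum of nonnegative terms, taken in ennreal (may be infinite).\<close>
definition sigma1 :: "(int \<Rightarrow> real) \<Rightarrow> nat \<Rightarrow> nat \<Rightarrow> int \<Rightarrow> ennreal" where
  "sigma1 r n s m = (\<Sum>\<^sub>\<infinity> j \<in> tuples n s.
      ennreal (\<Prod>i=1..s. r ((if i = 1 then m else j (i - 1)) + j i) / real_of_int \<bar>int n - j i\<bar>))"

definition rho_tilde :: "(int \<Rightarrow> real) \<Rightarrow> nat \<Rightarrow> real" where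
  "rho_tilde r n = tailnorm n r + 2 * l2norm r / sqrt (real n)"

end

theory Submission
  imports Defs
begin

text \<open>Write K(m, j) = r(m + j) / |n - j| for the nonnegative kernel on n + 2\<int> - {n}.
  Summing out j1 first shows that \<sigma>(n, s; m) is the s-fold iterate of K applied to the
  constant 1, so a uniform bound \<sigma>(n, s; -) \<le> C gives \<sigma>(n, k + s; m) \<le> C \<sigma>(n, k; m), and
  everything reduces to s = 1 and s = 2. Over n + 2\<int> - {n} one has \<Sum> 1/|n - j|^2 \<le> 1, so
  Cauchy-Schwarz gives \<sigma>(n, 1; m) \<le> \<parallel>r\<parallel>. If |m - n| \<le> n/2, the j with |m + j| \<ge> n only see
  the tail of r and contribute at most E_n(r), while all other j satisfy |n - j| > n/2, where
  \<Sum> 1/|n - j|^2 \<le> 4/n yields 2\<parallel>r\<parallel>/sqrt n. For s = 2 split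
  \<sigma>(n, 2; m) = \<Sum>_j K(m, j) \<sigma>(n, 1; j) according to whether j is within n/2 of n
  (then \<sigma>(n, 1; j) \<le> \<rho>_n and \<Sum> K \<le> \<parallel>r\<parallel>) or not (then \<sigma>(n, 1; j) \<le> \<parallel>r\<parallel> and
  \<Sum> K \<le> 2\<parallel>r\<parallel>/sqrt n \<le> \<rho>_n).\<close>

section \<open>Sums of inverse squares\<close>

lemma sum_inverse_squares_atLeastLessThan_le:
  fixes a :: int assumes "a \<ge> 1"
  shows "(\<Sum>k\<in>{a..<a + int d}. 1 / (real_of_int k)\<^sup>2) \<le> 2 / a - 2 / (a + d)"
proof (induction d)
  case 0 then show ?case by simp
next
  case (Suc d)
  define x where "x = real_of_int a + real d"
  have x1: "x \<ge> 1" using assms unfolding x_def by simp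
  have "1 / x\<^sup>2 \<le> 2 / (x * (x + 1))"
    using x1 by (simp add: power2_eq_square divide_simps)
  also have "\<dots> = 2 / x - 2 / (x + 1)" using x1 by (simp add: field_simps)
  finally have "1 / x\<^sup>2 \<le> 2 / x - 2 / (x + 1)" .
  moreover have "{a..<a + int (Suc d)} = insert (a + int d) {a..<a + int d}" by auto
  ultimately show ?case using Suc unfolding x_def by (simp add: algebra_simps)
qed

lemma sum_inverse_squares_atLeast_le:
  fixes a :: int assumes "a \<ge> 1" "finite K" "K \<subseteq> {a..}"
  shows "(\<Sum>k\<in>K. 1 / (real_of_int k)\<^sup>2) \<le> 2 / a"
proof -
  define d where "d = nat (Max (insert a K) - a + 1)"
  have "K \<subseteq> {a..<a + int d}"
    using assms(2,3) Max_ge[of "insert a K"] unfolding d_def by fastforce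
  then have "(\<Sum>k\<in>K. 1 / (real_of_int k)\<^sup>2) \<le> (\<Sum>k\<in>{a..<a + int d}. 1 / (real_of_int k)\<^sup>2)"
    by (intro sum_mono2) auto
  also have "\<dots> \<le> 2 / a - 2 / (a + d)" by (rule sum_inverse_squares_atLeastLessThan_le[OF assms(1)])
  also have "\<dots> \<le> 2 / a" using assms(1) by simp
  finally show ?thesis .
qed

lemma sum_inverse_squares_abs_ge_le:
  fixes a :: int assumes "a \<ge> 1" "finite K" "\<forall>k\<in>K. \<bar>k\<bar> \<ge> a"
  shows "(\<Sum>k\<in>K. 1 / (real_of_int k)\<^sup>2) \<le> 4 / a"
proof -
  let ?f = "\<lambda>k::int. 1 / (real_of_int k)\<^sup>2"
  have split: "K = {k\<in>K. k > 0} \<union> {k\<in>K. k < 0}" using assms(1,3) by force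
  have "sum ?f K = sum ?f {k\<in>K. k > 0} + sum ?f {k\<in>K. k < 0}"
    by (subst split, rule sum.union_disjoint) (use assms(2) in auto)
  also have "sum ?f {k\<in>K. k > 0} \<le> 2 / a"
    by (rule sum_inverse_squares_atLeast_le) (use assms in auto)
  also have "sum ?f {k\<in>K. k < 0} = sum ?f (uminus ` {k\<in>K. k < 0})"
    by (subst sum.reindex) (auto simp: inj_on_def)
  also have "\<dots> \<le> 2 / a"
    by (rule sum_inverse_squares_atLeast_le) (use assms in auto)
  finally show ?thesis by simp
qed

lemma sum_inverse_squares_Jset_le:
  assumes "finite F" "F \<subseteq> Jset n" "a \<ge> 1" "\<forall>j\<in>F. \<bar>j - int n\<bar> \<ge> 2 * a"
  shows "(\<Sum>j\<in>F. (1 / real_of_int \<bar>int n - j\<bar>)\<^sup>2) \<le> 1 / a"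
proof -
  define h where "h j = (j - int n) div 2" for j
  have hj: "j - int n = 2 * h j" if "j \<in> F" for j
    using that assms(2) unfolding h_def Jset_def by auto
  have inj: "inj_on h F"
  proof
    fix x y assume "x \<in> F" "y \<in> F" "h x = h y"
    then show "x = y" using hj[of x] hj[of y] by linarith
  qed
  have "(\<Sum>j\<in>F. (1 / real_of_int \<bar>int n - j\<bar>)\<^sup>2) = (\<Sum>j\<in>F. 1/4 * (1 / (real_of_int (h j))\<^sup>2))"
  proof (rule sum.cong)
    fix j assume "j \<in> F"
    then have "\<bar>int n - j\<bar> = 2 * \<bar>h j\<bar>" using hj[of j] by linarith
    then have "real_of_int \<bar>int n - j\<bar> = 2 * \<bar>real_of_int (h j)\<bar>"
      by (metis of_int_abs of_int_mult of_int_numeral)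
    then show "(1 / real_of_int \<bar>int n - j\<bar>)\<^sup>2 = 1/4 * (1 / (real_of_int (h j))\<^sup>2)"
      by (simp add: power2_eq_square field_simps)
  qed simp
  also have "\<dots> = 1/4 * (\<Sum>k\<in>h ` F. 1 / (real_of_int k)\<^sup>2)"
    by (simp add: sum_distrib_left sum.reindex[OF inj])
  also have "\<dots> \<le> 1/4 * (4 / a)"
  proof (intro mult_left_mono sum_inverse_squares_abs_ge_le ballI)
    fix k assume "k \<in> h ` F"
    then obtain j where "j \<in> F" "k = h j" by auto
    then show "a \<le> \<bar>k\<bar>" using hj[of j] assms(4) by force
  qed (use assms in auto)
  finally show ?thesis by simp
qed

corollary sum_inverse_squares_Jset_le_1:
  assumes "finite F" "F \<subseteq> Jset n"
  shows "(\<Sum>j\<in>F. (1 / real_of_int \<bar>int n - j\<bar>)\<^sup>2) \<le> 1"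
proof -
  have "\<bar>j - int n\<bar> \<ge> 2 * 1" if "j \<in> F" for j
  proof -
    have "even (j - int n)" "j \<noteq> int n" using that assms(2) by (auto simp: Jset_def)
    then show ?thesis by presburger
  qed
  then show ?thesis using sum_inverse_squares_Jset_le[OF assms, of 1] by simp
qed

lemma infsum_cmult_right_ennreal:
  fixes f :: "'a \<Rightarrow> ennreal"
  shows "(\<Sum>\<^sub>\<infinity>x\<in>A. c * f x) = c * (\<Sum>\<^sub>\<infinity>x\<in>A. f x)"
proof -
  have "(\<Sum>\<^sub>\<infinity>x\<in>A. c * f x) = (SUP F\<in>{F. finite F \<and> F \<subseteq> A}. c * sum f F)"
    by (simp add: nonneg_infsum_complete sum_distrib_left)
  also have "\<dots> = c * (\<Sum>\<^sub>\<infinity>x\<in>A. f x)"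
    by (simp add: nonneg_infsum_complete SUP_mult_left_ennreal)
  finally show ?thesis .
qed

lemma infsum_mono_ennreal:
  fixes f g :: "'a \<Rightarrow> ennreal"
  shows "(\<And>x. x \<in> A \<Longrightarrow> f x \<le> g x) \<Longrightarrow> infsum f A \<le> infsum g A"
  by (rule infsum_mono) (simp_all add: nonneg_summable_on_complete)

lemma sum_le_infsum_ennreal:
  fixes f :: "'a \<Rightarrow> ennreal"
  assumes "finite F" "F \<subseteq> A"
  shows "sum f F \<le> infsum f A"
  unfolding nonneg_infsum_complete[OF zero_le] using assms by (auto intro: SUP_upper)

lemma infsum_Sigma_le_ennreal:
  fixes f :: "'a \<times> 'b \<Rightarrow> ennreal"
  shows "infsum f (Sigma A B) \<le> (\<Sum>\<^sub>\<infinity>x\<in>A. \<Sum>\<^sub>\<infinity>y\<in>B x. f (x, y))"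
proof (rule infsum_le_finite_sums)
  fix F assume F: "finite F" "F \<subseteq> Sigma A B"
  define X where "X = fst ` F"
  define C where "C x = {y. (x, y) \<in> F}" for x
  have FS: "F = Sigma X C" unfolding X_def C_def by force
  have finC: "finite (C x)" for x
    using F(1) finite_subset[of "C x" "snd ` F"] unfolding C_def by force
  have "sum f F = (\<Sum>x\<in>X. \<Sum>y\<in>C x. f (x, y))"
    unfolding FS using sum.Sigma[of X C "\<lambda>x y. f (x, y)"] F(1) finC by (simp add: X_def)
  also have "\<dots> \<le> (\<Sum>x\<in>X. \<Sum>\<^sub>\<infinity>y\<in>B x. f (x, y))"
    using F(2) finC
    by (intro sum_mono sum_le_infsum_ennreal) (auto simp: C_def)
  also have "\<dots> \<le> (\<Sum>\<^sub>\<infinity>x\<in>A. \<Sum>\<^sub>\<infinity>y\<in>B x. f (x, y))"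
    using F by (intro sum_le_infsum_ennreal) (auto simp: X_def)
  finally show "sum f F \<le> (\<Sum>\<^sub>\<infinity>x\<in>A. \<Sum>\<^sub>\<infinity>y\<in>B x. f (x, y))" .
qed (simp add: nonneg_summable_on_complete)

lemma infsum_ennreal_le_of_finite_sums:
  fixes f :: "'a \<Rightarrow> real"
  assumes "\<And>x. x \<in> A \<Longrightarrow> f x \<ge> 0"
    and "\<And>F. finite F \<Longrightarrow> F \<subseteq> A \<Longrightarrow> sum f F \<le> B"
  shows "(\<Sum>\<^sub>\<infinity>x\<in>A. ennreal (f x)) \<le> ennreal B"
proof (rule infsum_le_finite_sums)
  fix F assume F: "finite F" "F \<subseteq> A"
  then have "(\<Sum>x\<in>F. ennreal (f x)) = ennreal (sum f F)"
    using assms(1) by (intro sum_ennreal) auto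
  also have "\<dots> \<le> ennreal B" using assms(2)[OF F] by (rule ennreal_leI)
  finally show "(\<Sum>x\<in>F. ennreal (f x)) \<le> ennreal B" .
qed (simp add: nonneg_summable_on_complete)

section \<open>The kernel and its iterates\<close>

definition sigma_kernel :: "(int \<Rightarrow> real) \<Rightarrow> nat \<Rightarrow> int \<Rightarrow> int \<Rightarrow> real" where
  "sigma_kernel r n m j = r (m + j) / real_of_int \<bar>int n - j\<bar>"

fun sigma_iter :: "(int \<Rightarrow> real) \<Rightarrow> nat \<Rightarrow> nat \<Rightarrow> int \<Rightarrow> ennreal" where
  "sigma_iter r n 0 m = 1"
| "sigma_iter r n (Suc t) m = (\<Sum>\<^sub>\<infinity>j\<in>Jset n. ennreal (sigma_kernel r n m j) * sigma_iter r n t j)"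

lemma sigma_iter_1: "sigma_iter r n 1 m = (\<Sum>\<^sub>\<infinity>j\<in>Jset n. ennreal (sigma_kernel r n m j))"
  by simp

lemma even_add_Jset: "even (m - int n) \<Longrightarrow> j \<in> Jset n \<Longrightarrow> even (m + j)"
  unfolding Jset_def by simp

lemma sigma_kernel_nonneg:
  assumes "\<And>k. even k \<Longrightarrow> r k \<ge> 0" "even (m - int n)" "j \<in> Jset n"
  shows "sigma_kernel r n m j \<ge> 0"
  unfolding sigma_kernel_def using assms(1)[OF even_add_Jset[OF assms(2,3)]] by simp

definition tuple_cons :: "nat \<Rightarrow> int \<Rightarrow> (nat \<Rightarrow> int) \<Rightarrow> nat \<Rightarrow> int" where
  "tuple_cons t j1 j' i = (if i = 1 then j1 else if 2 \<le> i \<and> i \<le> Suc t then j' (i - 1) else 0)"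

lemma bij_betw_tuple_cons:
  "bij_betw (\<lambda>(j1, j'). tuple_cons t j1 j') (Jset n \<times> tuples n t) (tuples n (Suc t))"
proof (rule bij_betw_byWitness[where f' = "\<lambda>j. (j 1, \<lambda>i. if 1 \<le> i \<and> i \<le> t then j (Suc i) else 0)"])
  show "\<forall>a\<in>Jset n \<times> tuples n t. (\<lambda>j. (j 1, \<lambda>i. if 1 \<le> i \<and> i \<le> t then j (Suc i) else 0))
      (case a of (j1, j') \<Rightarrow> tuple_cons t j1 j') = a"
    by (auto simp: tuple_cons_def tuples_def fun_eq_iff)
  show "\<forall>j\<in>tuples n (Suc t). (case (j 1, \<lambda>i. if 1 \<le> i \<and> i \<le> t then j (Suc i) else 0) of
      (j1, j') \<Rightarrow> tuple_cons t j1 j') = j"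
    by (auto simp: tuple_cons_def tuples_def fun_eq_iff)
  show "(\<lambda>(j1, j'). tuple_cons t j1 j') ` (Jset n \<times> tuples n t) \<subseteq> tuples n (Suc t)"
    unfolding tuples_def tuple_cons_def by (fastforce simp: le_diff_conv2)
  show "(\<lambda>j. (j 1, \<lambda>i. if 1 \<le> i \<and> i \<le> t then j (Suc i) else 0)) ` tuples n (Suc t)
      \<subseteq> Jset n \<times> tuples n t"
    by (auto simp: tuples_def)
qed

definition tuple_weight :: "(int \<Rightarrow> real) \<Rightarrow> nat \<Rightarrow> nat \<Rightarrow> int \<Rightarrow> (nat \<Rightarrow> int) \<Rightarrow> real" where
  "tuple_weight r n s m j = (\<Prod>i=1..s. sigma_kernel r n (if i = 1 then m else j (i - 1)) (j i))"

lemma sigma1_eq_infsum_tuple_weight: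
  "sigma1 r n s m = (\<Sum>\<^sub>\<infinity>j\<in>tuples n s. ennreal (tuple_weight r n s m j))"
  by (simp add: sigma1_def tuple_weight_def sigma_kernel_def)

lemma tuple_weight_tuple_cons:
  "tuple_weight r n (Suc t) m (tuple_cons t j1 j') = sigma_kernel r n m j1 * tuple_weight r n t j1 j'"
proof -
  let ?g = "\<lambda>i. sigma_kernel r n (if i = 1 then m else tuple_cons t j1 j' (i - 1)) (tuple_cons t j1 j' i)"
  have "tuple_weight r n (Suc t) m (tuple_cons t j1 j') = ?g 1 * prod ?g {Suc 1..Suc t}"
    unfolding tuple_weight_def by (subst prod.atLeast_Suc_atMost) simp_all
  also have "prod ?g {Suc 1..Suc t} = prod (\<lambda>i. ?g (Suc i)) {1..t}"
    by (rule prod.shift_bounds_cl_Suc_ivl)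
  also have "\<dots> = tuple_weight r n t j1 j'"
    unfolding tuple_weight_def by (rule prod.cong) (auto simp: tuple_cons_def)
  moreover have "?g 1 = sigma_kernel r n m j1" by (simp add: tuple_cons_def)
  ultimately show ?thesis by simp
qed

lemma sigma1_le_sigma_iter:
  assumes nonneg: "\<And>k. even k \<Longrightarrow> r k \<ge> 0"
  shows "even (m - int n) \<Longrightarrow> sigma1 r n t m \<le> sigma_iter r n t m"
proof (induction t arbitrary: m)
  case 0
  have "tuples n 0 = {\<lambda>_. 0}" unfolding tuples_def by auto
  then show ?case by (simp add: sigma1_def)
next
  case (Suc t)
  let ?w = "\<lambda>(j1, j'). ennreal (tuple_weight r n (Suc t) m (tuple_cons t j1 j'))"
  have "sigma1 r n (Suc t) m = (\<Sum>\<^sub>\<infinity>x\<in>Jset n \<times> tuples n t. ?w x)"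
    unfolding sigma1_eq_infsum_tuple_weight
    by (subst infsum_reindex_bij_betw[OF bij_betw_tuple_cons, symmetric]) (simp add: case_prod_unfold)
  also have "\<dots> \<le> (\<Sum>\<^sub>\<infinity>j1\<in>Jset n. \<Sum>\<^sub>\<infinity>j'\<in>tuples n t. ?w (j1, j'))"
    by (rule infsum_Sigma_le_ennreal)
  also have "\<dots> = (\<Sum>\<^sub>\<infinity>j1\<in>Jset n. ennreal (sigma_kernel r n m j1) * sigma1 r n t j1)"
  proof (rule infsum_cong)
    fix j1 assume "j1 \<in> Jset n"
    then have "ennreal (sigma_kernel r n m j1 * tuple_weight r n t j1 j')
        = ennreal (sigma_kernel r n m j1) * ennreal (tuple_weight r n t j1 j')" for j'
      by (intro ennreal_mult' sigma_kernel_nonneg[OF nonneg Suc.prems])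
    then show "(\<Sum>\<^sub>\<infinity>j'\<in>tuples n t. ?w (j1, j'))
        = ennreal (sigma_kernel r n m j1) * sigma1 r n t j1"
      by (simp add: tuple_weight_tuple_cons infsum_cmult_right_ennreal sigma1_eq_infsum_tuple_weight)
  qed
  also have "\<dots> \<le> sigma_iter r n (Suc t) m"
    unfolding sigma_iter.simps
    by (intro infsum_mono_ennreal mult_left_mono Suc.IH) (auto simp: Jset_def)
  finally show ?case .
qed

lemma sigma_iter_add_le:
  assumes "\<And>m. even (m - int n) \<Longrightarrow> sigma_iter r n s m \<le> C"
  shows "even (m - int n) \<Longrightarrow> sigma_iter r n (k + s) m \<le> C * sigma_iter r n k m"
proof (induction k arbitrary: m)
  case 0
  then show ?case using assms by simp
next
  case (Suc k)
  have "sigma_iter r n (Suc k + s) m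
      \<le> (\<Sum>\<^sub>\<infinity>j\<in>Jset n. ennreal (sigma_kernel r n m j) * (C * sigma_iter r n k j))"
    unfolding add_Suc sigma_iter.simps
    by (intro infsum_mono_ennreal mult_left_mono Suc.IH) (auto simp: Jset_def)
  also have "\<dots> = C * sigma_iter r n (Suc k) m"
    by (simp add: infsum_cmult_right_ennreal mult.left_commute)
  finally show ?case .
qed

section \<open>Cauchy-Schwarz estimates\<close>

lemma l2norm_nonneg: "l2norm r \<ge> 0"
  unfolding l2norm_def by (intro real_sqrt_ge_zero infsum_nonneg) simp

lemma tailnorm_nonneg: "tailnorm n r \<ge> 0"
  unfolding tailnorm_def by (intro real_sqrt_ge_zero infsum_nonneg) simp

lemma l2norm_div_sqrt_le_rho_tilde: "2 * l2norm r / sqrt n \<le> rho_tilde r n"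
  unfolding rho_tilde_def using tailnorm_nonneg by simp

lemma rho_tilde_nonneg: "rho_tilde r n \<ge> 0"
proof -
  have "0 \<le> 2 * l2norm r / sqrt n" using l2norm_nonneg[of r] by simp
  then show ?thesis using l2norm_div_sqrt_le_rho_tilde[of r n] by linarith
qed

context
  fixes r :: "int \<Rightarrow> real"
  assumes nonneg: "\<And>k. even k \<Longrightarrow> r k \<ge> 0"
begin

lemma sum_sigma_kernel_le:
  assumes F: "finite F" "F \<subseteq> Jset n" and m: "even (m - int n)"
    and S: "(\<lambda>j. m + j) ` F \<subseteq> S" "(\<lambda>k. (r k)\<^sup>2) summable_on S"
    and w: "(\<Sum>j\<in>F. (1 / real_of_int \<bar>int n - j\<bar>)\<^sup>2) \<le> w"
  shows "(\<Sum>j\<in>F. sigma_kernel r n m j) \<le> sqrt (\<Sum>\<^sub>\<infinity>k\<in>S. (r k)\<^sup>2) * sqrt w"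
proof -
  have "(\<Sum>j\<in>F. (r (m + j))\<^sup>2) = (\<Sum>\<^sub>\<infinity>k\<in>(\<lambda>j. m + j) ` F. (r k)\<^sup>2)"
    using F(1) by (simp add: sum.reindex inj_on_def)
  also have "\<dots> \<le> (\<Sum>\<^sub>\<infinity>k\<in>S. (r k)\<^sup>2)"
    using F(1) S by (intro infsum_mono_neutral) auto
  finally have r2: "(\<Sum>j\<in>F. (r (m + j))\<^sup>2) \<le> (\<Sum>\<^sub>\<infinity>k\<in>S. (r k)\<^sup>2)" .
  have "(\<Sum>j\<in>F. sigma_kernel r n m j) = (\<Sum>j\<in>F. \<bar>r (m + j)\<bar> * \<bar>1 / real_of_int \<bar>int n - j\<bar>\<bar>)"
    using F(2) nonneg even_add_Jset[OF m] by (intro sum.cong) (auto simp: sigma_kernel_def)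
  also have "\<dots> \<le> L2_set (\<lambda>j. r (m + j)) F * L2_set (\<lambda>j. 1 / real_of_int \<bar>int n - j\<bar>) F"
    by (rule L2_set_mult_ineq)
  also have "\<dots> \<le> sqrt (\<Sum>\<^sub>\<infinity>k\<in>S. (r k)\<^sup>2) * sqrt w"
    unfolding L2_set_def using r2 w
    by (intro mult_mono real_sqrt_le_mono) (auto intro: infsum_nonneg sum_nonneg)
  finally show ?thesis .
qed

context
  assumes l2: "(\<lambda>k. (r k)\<^sup>2) summable_on {k. even k}"
begin

lemma sum_sigma_kernel_le_l2norm:
  assumes F: "finite F" "F \<subseteq> Jset n" and m: "even (m - int n)"
  shows "(\<Sum>j\<in>F. sigma_kernel r n m j) \<le> l2norm r"
proof -
  have "(\<lambda>j. m + j) ` F \<subseteq> {k. even k}" using F(2) even_add_Jset[OF m] by auto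
  from sum_sigma_kernel_le[OF F m this l2 sum_inverse_squares_Jset_le_1[OF F]]
  show ?thesis by (simp add: l2norm_def)
qed

lemma sum_sigma_kernel_far_le:
  assumes F: "finite F" "F \<subseteq> Jset n" and m: "even (m - int n)" and "n > 0"
    and far: "\<forall>j\<in>F. real_of_int \<bar>j - int n\<bar> > real n / 2"
  shows "(\<Sum>j\<in>F. sigma_kernel r n m j) \<le> 2 * l2norm r / sqrt n"
proof -
  define a where "a = int (n div 4) + 1"
  have "2 * a \<le> \<bar>j - int n\<bar>" if "j \<in> F" for j
  proof -
    have "even (j - int n)" using that F(2) by (auto simp: Jset_def)
    moreover have "real_of_int (int n) < real_of_int (2 * \<bar>j - int n\<bar>)" using far that by auto
    then have "int n < 2 * \<bar>j - int n\<bar>" by (simp only: of_int_less_iff)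
    ultimately show ?thesis unfolding a_def by presburger
  qed
  then have "(\<Sum>j\<in>F. (1 / real_of_int \<bar>int n - j\<bar>)\<^sup>2) \<le> 1 / a"
    by (intro sum_inverse_squares_Jset_le[OF F]) (auto simp: a_def)
  also have "1 / real_of_int a \<le> 4 / n"
  proof -
    have "n \<le> 4 * (n div 4 + 1)" by presburger
    then have "real n \<le> real (4 * (n div 4 + 1))" by (simp only: of_nat_le_iff)
    also have "\<dots> = 4 * real_of_int a" by (simp add: a_def)
    finally have "real n \<le> 4 * real_of_int a" .
    then show ?thesis using \<open>n > 0\<close> by (simp add: a_def field_simps)
  qed
  finally have w: "(\<Sum>j\<in>F. (1 / real_of_int \<bar>int n - j\<bar>)\<^sup>2) \<le> 4 / n" .
  have "(\<lambda>j. m + j) ` F \<subseteq> {k. even k}" using F(2) even_add_Jset[OF m] by auto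
  from sum_sigma_kernel_le[OF F m this l2 w]
  show ?thesis by (simp add: l2norm_def real_sqrt_divide mult.commute)
qed

lemma sum_sigma_kernel_tail_le:
  assumes F: "finite F" "F \<subseteq> Jset n" and m: "even (m - int n)"
    and tail: "\<forall>j\<in>F. \<bar>m + j\<bar> \<ge> int n"
  shows "(\<Sum>j\<in>F. sigma_kernel r n m j) \<le> tailnorm n r"
proof -
  have "(\<lambda>k. (r k)\<^sup>2) summable_on {k. even k \<and> \<bar>k\<bar> \<ge> int n}"
    by (rule summable_on_subset_banach[OF l2]) auto
  moreover have "(\<lambda>j. m + j) ` F \<subseteq> {k. even k \<and> \<bar>k\<bar> \<ge> int n}"
    using F(2) tail even_add_Jset[OF m] by auto
  ultimately show ?thesis
    using sum_sigma_kernel_le[OF F m _ _ sum_inverse_squares_Jset_le_1[OF F]]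
    unfolding tailnorm_def by simp
qed

lemma sigma_iter_1_le_l2norm:
  assumes m: "even (m - int n)"
  shows "sigma_iter r n 1 m \<le> ennreal (l2norm r)"
  unfolding sigma_iter_1 using sigma_kernel_nonneg[OF nonneg m] sum_sigma_kernel_le_l2norm[OF _ _ m]
  by (intro infsum_ennreal_le_of_finite_sums) auto

lemma sigma_iter_1_le_rho_tilde:
  assumes m: "even (m - int n)" and near: "real_of_int \<bar>m - int n\<bar> \<le> real n / 2" and "n > 0"
  shows "sigma_iter r n 1 m \<le> ennreal (rho_tilde r n)"
  unfolding sigma_iter_1
proof (rule infsum_ennreal_le_of_finite_sums)
  fix F assume F: "finite F" "F \<subseteq> Jset n"
  let ?tail = "{j. \<bar>m + j\<bar> \<ge> int n}"
  have "sum (sigma_kernel r n m) F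
      = sum (sigma_kernel r n m) (F \<inter> ?tail) + sum (sigma_kernel r n m) (F - ?tail)"
    by (rule sum.Int_Diff[OF F(1)])
  also have "sum (sigma_kernel r n m) (F \<inter> ?tail) \<le> tailnorm n r"
    using F by (intro sum_sigma_kernel_tail_le[OF _ _ m]) auto
  also have "sum (sigma_kernel r n m) (F - ?tail) \<le> 2 * l2norm r / sqrt n"
  proof (rule sum_sigma_kernel_far_le[OF _ _ m \<open>n > 0\<close>])
    show "\<forall>j\<in>F - ?tail. real n / 2 < real_of_int \<bar>j - int n\<bar>"
    proof
      fix j assume "j \<in> F - ?tail"
      then have "real_of_int (m + j) < real_of_int (int n)" by (simp only: of_int_less_iff) auto
      then show "real n / 2 < real_of_int \<bar>j - int n\<bar>" using near by linarith
    qed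
  qed (use F in auto)
  finally show "sum (sigma_kernel r n m) F \<le> rho_tilde r n"
    unfolding rho_tilde_def by simp
qed (rule sigma_kernel_nonneg[OF nonneg m])

lemma sigma_iter_2_le:
  assumes m: "even (m - int n)" and "n > 0"
  shows "sigma_iter r n 2 m \<le> ennreal (2 * l2norm r * rho_tilde r n)"
proof -
  let ?K = "sigma_kernel r n m"
  let ?near = "{j. real_of_int \<bar>j - int n\<bar> \<le> real n / 2}"
  define R where "R = l2norm r"
  define \<rho> where "\<rho> = rho_tilde r n"
  define b where "b j = (if j \<in> ?near then \<rho> else R)" for j
  have R: "R \<ge> 0" "2 * R / sqrt n \<le> \<rho>"
    using l2norm_nonneg l2norm_div_sqrt_le_rho_tilde unfolding R_def \<rho>_def by auto
  have b: "0 \<le> b j" "sigma_iter r n 1 j \<le> ennreal (b j)" if "j \<in> Jset n" for j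
    using that R rho_tilde_nonneg sigma_iter_1_le_rho_tilde sigma_iter_1_le_l2norm \<open>n > 0\<close>
    by (auto simp: b_def R_def \<rho>_def Jset_def)
  have "sigma_iter r n 2 m = (\<Sum>\<^sub>\<infinity>j\<in>Jset n. ennreal (?K j) * sigma_iter r n 1 j)"
    by (simp add: numeral_2_eq_2)
  also have "\<dots> \<le> (\<Sum>\<^sub>\<infinity>j\<in>Jset n. ennreal (?K j * b j))"
    using b sigma_kernel_nonneg[OF nonneg m]
    by (intro infsum_mono_ennreal) (simp add: ennreal_mult' mult_left_mono)
  also have "\<dots> \<le> ennreal (2 * R * \<rho>)"
  proof (rule infsum_ennreal_le_of_finite_sums)
    fix F assume F: "finite F" "F \<subseteq> Jset n"
    have "(\<Sum>j\<in>F. ?K j * b j) = sum ?K (F \<inter> ?near) * \<rho> + sum ?K (F - ?near) * R"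
      by (simp add: sum.Int_Diff[OF F(1), of _ ?near] sum_distrib_right b_def)
    also have "\<dots> \<le> R * \<rho> + 2 * R / sqrt n * R"
    proof (intro add_mono mult_right_mono)
      show "sum ?K (F \<inter> ?near) \<le> R"
        unfolding R_def using F by (intro sum_sigma_kernel_le_l2norm[OF _ _ m]) auto
      show "sum ?K (F - ?near) \<le> 2 * R / sqrt n"
        unfolding R_def using F by (intro sum_sigma_kernel_far_le[OF _ _ m \<open>n > 0\<close>]) auto
    qed (use R rho_tilde_nonneg in \<open>auto simp: \<rho>_def\<close>)
    also have "\<dots> \<le> 2 * R * \<rho>"
      using mult_right_mono[OF R(2) R(1)] by (simp add: algebra_simps)
    finally show "(\<Sum>j\<in>F. ?K j * b j) \<le> 2 * R * \<rho>" .
  qed (use b sigma_kernel_nonneg[OF nonneg m] in simp)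
  finally show ?thesis unfolding R_def \<rho>_def .
qed

lemma sigma_iter_even_le:
  assumes "n > 0"
  shows "even (m - int n) \<Longrightarrow> sigma_iter r n (2 * p) m \<le> ennreal ((2 * l2norm r * rho_tilde r n) ^ p)"
proof (induction p arbitrary: m)
  case 0
  then show ?case by simp
next
  case (Suc p)
  define X where "X = 2 * l2norm r * rho_tilde r n"
  have "X \<ge> 0" unfolding X_def using l2norm_nonneg rho_tilde_nonneg by simp
  have "sigma_iter r n (2 + 2 * p) m \<le> ennreal (X ^ p) * sigma_iter r n 2 m"
    using Suc unfolding X_def by (intro sigma_iter_add_le) auto
  also have "\<dots> \<le> ennreal (X ^ p) * ennreal X"
    using sigma_iter_2_le[OF Suc.prems assms] unfolding X_def by (intro mult_left_mono) auto
  finally show ?case using \<open>X \<ge> 0\<close> by (simp add: X_def ennreal_mult[symmetric] mult.commute)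
qed

lemma sigma_iter_odd_le:
  assumes "n > 0" and m: "even (m - int n)"
  shows "sigma_iter r n (2 * p + 1) m \<le> ennreal (l2norm r * (2 * l2norm r * rho_tilde r n) ^ p)"
proof -
  define X where "X = 2 * l2norm r * rho_tilde r n"
  have "X \<ge> 0" unfolding X_def using l2norm_nonneg rho_tilde_nonneg by simp
  have "sigma_iter r n (1 + 2 * p) m \<le> ennreal (X ^ p) * sigma_iter r n 1 m"
    using sigma_iter_even_le[OF assms(1)] m unfolding X_def by (intro sigma_iter_add_le)
  also have "\<dots> \<le> ennreal (X ^ p) * ennreal (l2norm r)"
    using sigma_iter_1_le_l2norm[OF m] by (intro mult_left_mono) auto
  finally show ?thesis
    using \<open>X \<ge> 0\<close> l2norm_nonneg[of r] by (simp add: X_def ennreal_mult[symmetric] mult.commute)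
qed

end

end

theorem lemma3:
  fixes r :: "int \<Rightarrow> real" and n :: nat
  assumes l2: "(\<lambda>k. (r k)\<^sup>2) summable_on {k. even k}"
    and nonneg: "\<And>k. even k \<Longrightarrow> r k \<ge> 0"
    and n4: "n \<ge> 4"
  shows "(\<forall>m. even (m - int n) \<and> real_of_int \<bar>m - int n\<bar> \<le> real n / 2
            \<longrightarrow> sigma1 r n 1 m \<le> ennreal (rho_tilde r n))
      \<and> (\<forall>m. even (m - int n) \<longrightarrow> sigma1 r n 1 m \<le> ennreal (l2norm r))
      \<and> (\<forall>p m. p \<ge> 1 \<and> even (m - int n)
            \<longrightarrow> sigma1 r n (2 * p) m \<le> ennreal ((2 * l2norm r * rho_tilde r n) ^ p))
      \<and> (\<forall>p m. even (m - int n)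
            \<longrightarrow> sigma1 r n (2 * p + 1) m \<le> ennreal (l2norm r * (2 * l2norm r * rho_tilde r n) ^ p))"
proof -
  have n: "n > 0" using n4 by simp
  have "sigma1 r n s m \<le> sigma_iter r n s m" if "even (m - int n)" for s m
    using sigma1_le_sigma_iter[OF nonneg that] .
  with sigma_iter_1_le_rho_tilde[OF nonneg l2 _ _ n] sigma_iter_1_le_l2norm[OF nonneg l2]
    sigma_iter_even_le[OF nonneg l2 n] sigma_iter_odd_le[OF nonneg l2 n]
  show ?thesis by (blast intro: order_trans)
qed

end
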